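(* For every integer $N\ge 0$, let $T_{1\times 3}(4,N)$ be the number of tilings of a $4\times n$ rectangle, $n=3N/4$, by $N$ tiles of size $1\times 3$ (and $T_{1\times 3}(4,N)=0$ if $3N/4\notin\mathbb{Z}$). Then, as formal power series, \[ \sum_{N\ge 0} T_{1\times 3}(4,N)\,z^N=\frac{(1-z)^2(1+z)^2(1+z^2)^2}{1-5z^4+3z^8-z^{12}}. \]
   Context: A tiling of an $m\times n$ rectangle (width $m$, length $n$, made of $mn$ unit squares) by $a\times b$ tiles is a partition of the rectangle into non-overlapping axis-parallel $a\times b$ rectangles with integer corner coordinates, each placed in either of its two orientations. Tilings related by reflections or rotations of the rectangle are counted as distinct. The empty tiling counts once for $N=0$. *)

theory Defs
  imports "HOL-Computational_Algebra.Formal_Power_Series"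
begin

definition cell_rect :: "nat \<Rightarrow> nat \<Rightarrow> nat \<Rightarrow> nat \<Rightarrow> (nat \<times> nat) set" where
  "cell_rect x y a b = {x..<x+a} \<times> {y..<y+b}"

definition tile_placements :: "nat \<Rightarrow> nat \<Rightarrow> (nat \<times> nat) set set" where
  "tile_placements a b = {cell_rect x y a b | x y. True} \<union> {cell_rect x y b a | x y. True}"

definition is_tiling :: "nat \<Rightarrow> nat \<Rightarrow> nat \<Rightarrow> nat \<Rightarrow> (nat \<times> nat) set set \<Rightarrow> bool" where
  "is_tiling m n a b P \<longleftrightarrow>
     P \<subseteq> tile_placements a b \<and>
     (\<forall>S\<in>P. \<forall>T\<in>P. S \<noteq> T \<longrightarrow> S \<inter> T = {}) \<and>
     \<Union>P = {0..<m} \<times> {0..<n}"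

definition num_tilings :: "nat \<Rightarrow> nat \<Rightarrow> nat \<Rightarrow> nat \<Rightarrow> nat" where
  "num_tilings m n a b = card {P. is_tiling m n a b P}"

definition T13_4 :: "nat \<Rightarrow> nat" where
  "T13_4 N = (if 4 dvd (3 * N)
              then card {P. is_tiling 4 (3 * N div 4) 1 3 P \<and> card P = N}
              else 0)"

end

theory Submission
  imports Defs
begin

(*
  Count tilings cell by cell. In any region the first cell in row-major order is the lower-left
  corner of the tile covering it, so that tile is the vertical or the horizontal 1 x 3 tile
  starting there, and removing it leaves a region of the same kind: a strip above a profile
  recording how far each column is already covered.

  For width 4 let f r count the tilings of the 4 x r rectangle, and A, B (resp. their mirror
  images A', B') the completions of the profiles [2,0,0,0], [1,0,0,0] (resp. [0,0,0,2],
  [0,0,0,1]) to height r. Following the first cell for three rows gives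
    f (r + 3) = f r + A (r + 2) + A' (r + 2),
    A (r + 3) = A r + B (r + 2),   B (r + 3) = B r + f (r + 2),
  and eliminating A, A', B, B' yields f (r + 9) = 5 f (r + 6) - 3 f (r + 3) + f r. Since
  T_{1x3}(4, 4k) = f (3k), this is the denominator 1 - 5 z^4 + 3 z^8 - z^12; the numerator
  (1 - z^4)^2 comes from f 0, f 3, f 6 = 1, 3, 13.
*)

definition tilings :: "nat \<Rightarrow> nat \<Rightarrow> (nat \<times> nat) set \<Rightarrow> (nat \<times> nat) set set set" where
  "tilings a b R = {P. P \<subseteq> tile_placements a b \<and> pairwise disjnt P \<and> \<Union>P = R}"

lemma is_tiling_iff_tilings:
  "is_tiling m n a b P \<longleftrightarrow> P \<in> tilings a b ({0..<m} \<times> {0..<n})"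
  by (auto simp: is_tiling_def tilings_def pairwise_def disjnt_def)

lemma tile_placementsE:
  assumes "t \<in> tile_placements a b"
  obtains x y where "t = cell_rect x y a b" | x y where "t = cell_rect x y b a"
  using assms unfolding tile_placements_def by auto

lemma card_tile: "t \<in> tile_placements a b \<Longrightarrow> card t = a * b"
  by (elim tile_placementsE) (simp_all add: cell_rect_def card_cartesian_product)

lemma finite_tile: "t \<in> tile_placements a b \<Longrightarrow> 0 < a \<Longrightarrow> 0 < b \<Longrightarrow> finite t"
  using card_tile by (metis card_ge_0_finite nat_0_less_mult_iff)

lemma tile_nonempty: "t \<in> tile_placements a b \<Longrightarrow> 0 < a \<Longrightarrow> 0 < b \<Longrightarrow> t \<noteq> {}"
  using card_tile by fastforce

lemma finite_tilings: "finite R \<Longrightarrow> finite (tilings a b R)"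
  by (rule finite_subset[of _ "Pow (Pow R)"]) (auto simp: tilings_def)

lemma tilings_empty:
  assumes "0 < a" "0 < b"
  shows "tilings a b {} = {{}}"
  using tile_nonempty[OF _ assms] by (auto simp: tilings_def)

lemma card_tiling:
  assumes "P \<in> tilings a b R" "0 < a" "0 < b"
  shows "card R = a * b * card P"
proof -
  have "card R = (\<Sum>t\<in>P. card t)"
    using assms finite_tile by (auto simp: tilings_def intro!: card_Union_disjoint)
  also have "\<dots> = (\<Sum>t\<in>P. a * b)"
    by (rule sum.cong) (use assms card_tile in \<open>auto simp: tilings_def\<close>)
  finally show ?thesis by simp
qed

lemma tile_at_first_cell:
  assumes "t \<in> tile_placements a b" "(cx, cy) \<in> t" "t \<subseteq> R"
    and first: "\<forall>(x, y)\<in>R. cy < y \<or> (y = cy \<and> cx \<le> x)"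
  shows "t = cell_rect cx cy a b \<or> t = cell_rect cx cy b a"
proof -
  have corner: "t = cell_rect cx cy c d"
    if t: "t = cell_rect x y c d" for x y c d
  proof -
    have "(x, y) \<in> t" using t assms(2) by (auto simp: cell_rect_def)
    then have "cy < y \<or> (y = cy \<and> cx \<le> x)" using assms(3) first by auto
    with t assms(2) show ?thesis by (auto simp: cell_rect_def)
  qed
  from assms(1) show ?thesis
    by (rule tile_placementsE) (use corner in blast)+
qed

lemma card_tilings_containing:
  assumes t: "t \<in> tile_placements a b" and "0 < a" "0 < b"
  shows "card {P \<in> tilings a b R. t \<in> P} = (if t \<subseteq> R then card (tilings a b (R - t)) else 0)"
proof (cases "t \<subseteq> R")
  case False
  then have "{P \<in> tilings a b R. t \<in> P} = {}" by (auto simp: tilings_def)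
  with False show ?thesis by (simp only: card.empty if_False)
next
  case True
  have "bij_betw (\<lambda>P. P - {t}) {P \<in> tilings a b R. t \<in> P} (tilings a b (R - t))"
  proof (rule bij_betw_byWitness[where f' = "insert t"])
    have "t \<notin> Q" if "Q \<in> tilings a b (R - t)" for Q
      using that tile_nonempty[OF t \<open>0 < a\<close> \<open>0 < b\<close>] by (auto simp: tilings_def)
    then show "\<forall>Q\<in>tilings a b (R - t). insert t Q - {t} = Q" by auto
    show "\<forall>P\<in>{P \<in> tilings a b R. t \<in> P}. insert t (P - {t}) = P" by auto
    show "(\<lambda>P. P - {t}) ` {P \<in> tilings a b R. t \<in> P} \<subseteq> tilings a b (R - t)"
      by (auto simp: tilings_def pairwise_def disjnt_def)
    have "insert t Q \<in> tilings a b R" if "Q \<in> tilings a b (R - t)" for Q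
    proof -
      have "Q \<subseteq> tile_placements a b" "pairwise disjnt Q" "\<Union>Q = R - t"
        using that by (auto simp: tilings_def)
      then show ?thesis
        using t True by (auto simp: tilings_def pairwise_insert disjnt_def)
    qed
    then show "insert t ` tilings a b (R - t) \<subseteq> {P \<in> tilings a b R. t \<in> P}"
      by blast
  qed
  with True show ?thesis by (simp add: bij_betw_same_card)
qed

lemma card_tilings_first_cell:
  assumes "finite R" and first: "(cx, cy) \<in> R" "\<forall>(x, y)\<in>R. cy < y \<or> (y = cy \<and> cx \<le> x)"
    and "0 < a" "0 < b" "a \<noteq> b"
  defines "V \<equiv> cell_rect cx cy a b" and "H \<equiv> cell_rect cx cy b a"
  shows "card (tilings a b R) =
    (if V \<subseteq> R then card (tilings a b (R - V)) else 0) +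
    (if H \<subseteq> R then card (tilings a b (R - H)) else 0)"
proof -
  have tiles: "V \<in> tile_placements a b" "H \<in> tile_placements a b"
    by (auto simp: V_def H_def tile_placements_def)
  have corner: "(cx, cy) \<in> V" "(cx, cy) \<in> H"
    using assms by (auto simp: V_def H_def cell_rect_def)
  have "fst ` V = {cx..<cx + a}" "fst ` H = {cx..<cx + b}"
    using assms by (simp_all add: V_def H_def cell_rect_def)
  then have "V \<noteq> H"
    using \<open>a \<noteq> b\<close> by (metis add_left_cancel atLeastLessThan_inj(2) less_add_same_cancel1 \<open>0 < a\<close> \<open>0 < b\<close>)
  have "\<not> (V \<in> P \<and> H \<in> P)" if "P \<in> tilings a b R" for P
  proof
    assume "V \<in> P \<and> H \<in> P"
    with that \<open>V \<noteq> H\<close> have "disjnt V H" by (auto simp: tilings_def dest: pairwiseD)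
    with corner show False by (auto simp: disjnt_def)
  qed
  then have disj: "{P \<in> tilings a b R. V \<in> P} \<inter> {P \<in> tilings a b R. H \<in> P} = {}"
    by blast
  have "P \<in> {P \<in> tilings a b R. V \<in> P} \<union> {P \<in> tilings a b R. H \<in> P}"
    if P: "P \<in> tilings a b R" for P
  proof -
    have "(cx, cy) \<in> \<Union>P" using P first(1) by (simp add: tilings_def)
    then obtain t where t: "t \<in> P" "(cx, cy) \<in> t" by blast
    with P have "t \<in> tile_placements a b" "t \<subseteq> R" by (auto simp: tilings_def)
    then have "t = V \<or> t = H"
      unfolding V_def H_def using t(2) first(2) by (intro tile_at_first_cell)
    with P t(1) show ?thesis by blast
  qed
  then have "tilings a b R = {P \<in> tilings a b R. V \<in> P} \<union> {P \<in> tilings a b R. H \<in> P}"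
    by blast
  moreover have "finite {P \<in> tilings a b R. t \<in> P}" for t
    using finite_tilings[OF \<open>finite R\<close>] by simp
  ultimately have "card (tilings a b R) =
      card {P \<in> tilings a b R. V \<in> P} + card {P \<in> tilings a b R. H \<in> P}"
    using card_Un_disjoint[OF _ _ disj] by metis
  then show ?thesis
    using card_tilings_containing[OF _ \<open>0 < a\<close> \<open>0 < b\<close>] tiles by simp
qed

definition region :: "nat list \<Rightarrow> nat \<Rightarrow> nat \<Rightarrow> (nat \<times> nat) set" where
  "region p y n = {(x, j). x < length p \<and> y + p ! x \<le> j \<and> j < n}"

lemma finite_region: "finite (region p y n)"
  by (rule finite_subset[of _ "{..<length p} \<times> {..<n}"]) (auto simp: region_def)

lemma region_empty: "region p y y = {}"
  by (auto simp: region_def)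

lemma region_shift:
  assumes "\<forall>a\<in>set p. 0 < a"
  shows "region p y n = region (map (\<lambda>a. a - 1) p) (Suc y) n"
proof -
  have "0 < p ! x" if "x < length p" for x
    using assms that by simp
  then show ?thesis by (force simp: region_def)
qed

lemma region_first_cell:
  assumes "x < length p" "p ! x = 0" "\<And>i. i < x \<Longrightarrow> 0 < p ! i" "y < n"
  shows "(x, y) \<in> region p y n" "\<forall>(i, j)\<in>region p y n. y < j \<or> (j = y \<and> x \<le> i)"
proof -
  show "(x, y) \<in> region p y n" using assms by (simp add: region_def)
  have "j = y \<and> x \<le> i" if "(i, j) \<in> region p y n" "\<not> y < j" for i j
    using that assms(3)[of i] by (auto simp: region_def intro: leI)
  then show "\<forall>(i, j)\<in>region p y n. y < j \<or> (j = y \<and> x \<le> i)" by blast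
qed

lemma vertical_subset_region:
  assumes "x < length p" "p ! x = 0"
  shows "cell_rect x y 1 3 \<subseteq> region p y n \<longleftrightarrow> y + 3 \<le> n"
proof
  assume "cell_rect x y 1 3 \<subseteq> region p y n"
  moreover have "(x, y + 2) \<in> cell_rect x y 1 3" by (simp add: cell_rect_def)
  ultimately show "y + 3 \<le> n" by (auto simp: region_def)
qed (use assms in \<open>auto simp: region_def cell_rect_def\<close>)

lemma region_remove_vertical:
  "x < length p \<Longrightarrow> p ! x = 0 \<Longrightarrow> region p y n - cell_rect x y 1 3 = region (p[x := 3]) y n"
  by (auto simp: region_def cell_rect_def nth_list_update split: if_splits)

lemma horizontal_subset_region:
  "cell_rect x y 3 1 \<subseteq> region p y n \<longleftrightarrow>
    x + 2 < length p \<and> p ! x = 0 \<and> p ! (x + 1) = 0 \<and> p ! (x + 2) = 0 \<and> y < n"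
  by (auto simp: region_def cell_rect_def subset_iff numeral_3_eq_3 less_Suc_eq)

lemma region_remove_horizontal:
  "x + 2 < length p \<Longrightarrow> p ! x = 0 \<Longrightarrow> p ! (x + 1) = 0 \<Longrightarrow> p ! (x + 2) = 0 \<Longrightarrow>
    region p y n - cell_rect x y 3 1 = region (p[x := 1, x + 1 := 1, x + 2 := 1]) y n"
  by (auto simp: region_def cell_rect_def nth_list_update numeral_3_eq_3 less_Suc_eq split: if_splits)

lemma card_tilings_region_first_zero:
  assumes x: "x < length p" "p ! x = 0" "\<And>i. i < x \<Longrightarrow> 0 < p ! i" and "y < n"
  shows "card (tilings 1 3 (region p y n)) =
    (if y + 3 \<le> n then card (tilings 1 3 (region (p[x := 3]) y n)) else 0) +
    (if x + 2 < length p \<and> p ! (x + 1) = 0 \<and> p ! (x + 2) = 0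
     then card (tilings 1 3 (region (p[x := 1, x + 1 := 1, x + 2 := 1]) y n)) else 0)"
proof -
  have "card (tilings 1 3 (region p y n)) =
      (if cell_rect x y 1 3 \<subseteq> region p y n
       then card (tilings 1 3 (region p y n - cell_rect x y 1 3)) else 0) +
      (if cell_rect x y 3 1 \<subseteq> region p y n
       then card (tilings 1 3 (region p y n - cell_rect x y 3 1)) else 0)"
    using region_first_cell[OF x \<open>y < n\<close>] by (intro card_tilings_first_cell finite_region) simp_all
  then show ?thesis
    using \<open>y < n\<close> x(2) vertical_subset_region[OF x(1,2)] region_remove_vertical[OF x(1,2)]
      horizontal_subset_region[of x y p n] region_remove_horizontal[of x p y n]
    by (simp split: if_splits)
qed

definition zero_positions :: "nat list \<Rightarrow> nat set" where
  "zero_positions p = {i. i < length p \<and> p ! i = 0}"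

lemma zero_positions_update: "0 < v \<Longrightarrow> zero_positions (p[x := v]) = zero_positions p - {x}"
  by (cases "x < length p") (auto simp: zero_positions_def nth_list_update)

lemma finite_zero_positions: "finite (zero_positions p)"
  by (simp add: zero_positions_def)

lemma card_zero_positions_le: "card (zero_positions p) \<le> length p"
  using card_mono[of "{..<length p}" "zero_positions p"] by (auto simp: zero_positions_def)

definition first_zero :: "nat list \<Rightarrow> nat" where
  "first_zero p = length (takeWhile (\<lambda>a. 0 < a) p)"

lemma first_zero_spec:
  fixes p :: "nat list"
  assumes "\<not> (\<forall>a\<in>set p. 0 < a)"
  shows "first_zero p < length p" "p ! first_zero p = 0" "\<And>i. i < first_zero p \<Longrightarrow> 0 < p ! i"
proof -
  show "first_zero p < length p"
    using assms takeWhile_eq_all_conv[of "\<lambda>a. 0 < a" p] length_takeWhile_le[of "\<lambda>a. 0 < a" p]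
    unfolding first_zero_def by (metis le_neq_implies_less takeWhile_eq_take take_all)
  then show "p ! first_zero p = 0"
    unfolding first_zero_def using nth_length_takeWhile[of "\<lambda>a. 0 < a" p] by simp
  show "0 < p ! i" if "i < first_zero p" for i
    using that set_takeWhileD nth_mem takeWhile_nth unfolding first_zero_def by metis
qed

(* The number of tilings of region p y (y + r) (see card_tilings_region). A profile sticking out
   of the strip gets 0 rather than a junk value, so that the recursion equations below hold for
   all r. *)
function profile_tilings :: "nat \<Rightarrow> nat list \<Rightarrow> nat" where
  "profile_tilings r p =
    (if \<exists>a\<in>set p. r < a then 0
     else if r = 0 then 1
     else if \<forall>a\<in>set p. 0 < a then profile_tilings (r - 1) (map (\<lambda>a. a - 1) p)
     else let x = first_zero p in
       profile_tilings r (p[x := 3]) +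
       (if x + 2 < length p \<and> p ! (x + 1) = 0 \<and> p ! (x + 2) = 0
        then profile_tilings r (p[x := 1, x + 1 := 1, x + 2 := 1]) else 0))"
  by pat_completeness auto
termination
proof (relation "measure (\<lambda>(r, p). Suc (length p) * r + card (zero_positions p))", goal_cases)
  case (2 r p)
  have "card (zero_positions (map (\<lambda>a. a - 1) p)) \<le> length p"
    using card_zero_positions_le[of "map (\<lambda>a. a - 1) p"] by simp
  with 2 show ?case by (cases r) auto
next
  case (3 r p x)
  with first_zero_spec have "x \<in> zero_positions p" by (auto simp: zero_positions_def)
  then have "card (zero_positions p - {x}) < card (zero_positions p)"
    by (rule card_Diff1_less[OF finite_zero_positions])
  with 3 show ?case by (simp add: zero_positions_update)
next
  case (4 r p x)
  with first_zero_spec have "x \<in> zero_positions p" by (auto simp: zero_positions_def)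
  then have "card (zero_positions p - {x} - {x + 1} - {x + 2}) < card (zero_positions p)"
    by (meson Diff_subset card_Diff1_less card_mono finite_zero_positions le_less_trans finite_Diff)
  with 4 show ?case by (simp add: zero_positions_update)
qed simp

declare profile_tilings.simps [simp del]

lemma profile_tilings_overflow: "\<exists>a\<in>set p. r < a \<Longrightarrow> profile_tilings r p = 0"
  by (simp add: profile_tilings.simps)

lemma bounded_list_update:
  fixes p :: "nat list"
  assumes "\<forall>a\<in>set p. a \<le> r" "v \<le> r"
  shows "\<forall>a\<in>set (p[i := v]). a \<le> r"
  using assms set_update_subset_insert[of p i v] by blast

lemma overflow_list_update:
  fixes p :: "nat list"
  assumes "\<exists>a\<in>set p. r < a" "p ! j = 0"
  shows "\<exists>a\<in>set (p[j := v]). r < a"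
proof -
  obtain i where "i < length p" "r < p ! i" using assms(1) by (auto simp: in_set_conv_nth)
  moreover from this assms(2) have "i \<noteq> j" by auto
  ultimately show ?thesis by (metis length_list_update nth_list_update_neq nth_mem)
qed

lemma profile_tilings_shift:
  assumes "\<forall>a\<in>set p. 0 < a"
  shows "profile_tilings (Suc r) p = profile_tilings r (map (\<lambda>a. a - 1) p)"
proof (cases "\<exists>a\<in>set p. Suc r < a")
  case True
  then have "\<exists>a\<in>set (map (\<lambda>a. a - 1) p). r < a" by force
  with True show ?thesis by (simp add: profile_tilings_overflow)
next
  case False
  with assms show ?thesis by (subst profile_tilings.simps) simp
qed

lemma profile_tilings_fill:
  assumes "\<not> (\<forall>a\<in>set p. 0 < a)"
  defines "x \<equiv> first_zero p"
  shows "profile_tilings (Suc r) p = profile_tilings (Suc r) (p[x := 3]) +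
    (if x + 2 < length p \<and> p ! (x + 1) = 0 \<and> p ! (x + 2) = 0
     then profile_tilings (Suc r) (p[x := 1, x + 1 := 1, x + 2 := 1]) else 0)"
proof (cases "\<exists>a\<in>set p. Suc r < a")
  case True
  have x: "p ! x = 0" using first_zero_spec(2)[OF assms(1)] by (simp add: x_def)
  have "\<exists>a\<in>set (p[x := 1, x + 1 := 1, x + 2 := 1]). Suc r < a"
    if "p ! (x + 1) = 0" "p ! (x + 2) = 0"
    using True x that by (intro overflow_list_update) (simp_all add: nth_list_update_neq)
  with True x show ?thesis by (simp add: profile_tilings_overflow overflow_list_update)
next
  case False
  with assms(1) show ?thesis by (subst profile_tilings.simps) (auto simp: Let_def x_def)
qed

lemma card_tilings_region:
  "\<forall>a\<in>set p. a \<le> r \<Longrightarrow> card (tilings 1 3 (region p y (y + r))) = profile_tilings r p"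
proof (induction r p arbitrary: y rule: profile_tilings.induct)
  case (1 r p)
  consider "r = 0" | "0 < r" "\<forall>a\<in>set p. 0 < a" | "0 < r" "\<not> (\<forall>a\<in>set p. 0 < a)" by blast
  then show ?case
  proof cases
    case 1
    then have "profile_tilings r p = 1"
      using "1.prems" by (subst profile_tilings.simps) auto
    with 1 show ?thesis by (simp add: region_empty tilings_empty)
  next
    case 2
    have "region p y (y + r) = region (map (\<lambda>a. a - 1) p) (Suc y) (Suc y + (r - 1))"
      using 2 region_shift by simp
    moreover have "profile_tilings r p = profile_tilings (r - 1) (map (\<lambda>a. a - 1) p)"
      using 2 "1.prems" by (subst profile_tilings.simps) auto
    moreover have "card (tilings 1 3 (region (map (\<lambda>a. a - 1) p) (Suc y) (Suc y + (r - 1))))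
        = profile_tilings (r - 1) (map (\<lambda>a. a - 1) p)"
      using 2 "1.prems" by (intro "1.IH"(1)) auto
    ultimately show ?thesis by simp
  next
    case 3
    define x where "x = first_zero p"
    note x = first_zero_spec[OF 3(2), folded x_def]
    let ?V = "p[x := 3]" and ?H = "p[x := 1, x + 1 := 1, x + 2 := 1]"
    have V: "(if y + 3 \<le> y + r then card (tilings 1 3 (region ?V y (y + r))) else 0) = profile_tilings r ?V"
    proof (cases "3 \<le> r")
      case True
      then have "\<forall>a\<in>set ?V. a \<le> r" using "1.prems" by (intro bounded_list_update)
      with 3 "1.prems" have "card (tilings 1 3 (region ?V y (y + r))) = profile_tilings r ?V"
        by (intro "1.IH"(2)[OF _ _ 3(2) x_def]) auto
      with True show ?thesis by simp
    next
      case False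
      with set_update_memI[OF x(1)] have "\<exists>a\<in>set ?V. r < a" by (meson not_le)
      with False show ?thesis by (simp add: profile_tilings_overflow)
    qed
    have H: "card (tilings 1 3 (region ?H y (y + r))) = profile_tilings r ?H"
      if "x + 2 < length p \<and> p ! (x + 1) = 0 \<and> p ! (x + 2) = 0"
    proof -
      have "\<forall>a\<in>set ?H. a \<le> r" using "1.prems" 3 by (intro bounded_list_update) auto
      with 3 "1.prems" show ?thesis by (intro "1.IH"(3)[OF _ _ 3(2) x_def that]) auto
    qed
    have "profile_tilings r p = profile_tilings r ?V +
        (if x + 2 < length p \<and> p ! (x + 1) = 0 \<and> p ! (x + 2) = 0 then profile_tilings r ?H else 0)"
      using 3 "1.prems" by (subst profile_tilings.simps) (auto simp: x_def Let_def)
    with card_tilings_region_first_zero[OF x, of y "y + r"] V H 3(1) show ?thesis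
      by simp
  qed
qed

lemma profile_tilings_flat_step:
  "profile_tilings (r + 3) [0,0,0,0] =
    profile_tilings r [0,0,0,0] + profile_tilings (r + 2) [2,0,0,0] + profile_tilings (r + 2) [0,0,0,2]"
  by (simp add: eval_nat_numeral profile_tilings_shift profile_tilings_fill first_zero_def)

lemma profile_tilings_left_steps:
  "profile_tilings (r + 3) [2,0,0,0] = profile_tilings r [2,0,0,0] + profile_tilings (r + 2) [1,0,0,0]"
  "profile_tilings (r + 3) [1,0,0,0] = profile_tilings r [1,0,0,0] + profile_tilings (r + 2) [0,0,0,0]"
  by (simp_all add: eval_nat_numeral profile_tilings_shift profile_tilings_fill first_zero_def)

lemma profile_tilings_right_steps:
  "profile_tilings (r + 3) [0,0,0,2] = profile_tilings r [0,0,0,2] + profile_tilings (r + 2) [0,0,0,1]"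
  "profile_tilings (r + 3) [0,0,0,1] = profile_tilings r [0,0,0,1] + profile_tilings (r + 2) [0,0,0,0]"
  by (simp_all add: eval_nat_numeral profile_tilings_shift profile_tilings_fill first_zero_def)

lemma profile_tilings_flat_recurrence:
  "profile_tilings (r + 9) [0,0,0,0] + 3 * profile_tilings (r + 3) [0,0,0,0] =
    5 * profile_tilings (r + 6) [0,0,0,0] + profile_tilings r [0,0,0,0]"
  using profile_tilings_flat_step[of r] profile_tilings_flat_step[of "r + 3"]
    profile_tilings_flat_step[of "r + 6"]
    profile_tilings_left_steps[of "r + 2"] profile_tilings_left_steps[of "r + 4"]
    profile_tilings_left_steps[of "r + 5"]
    profile_tilings_right_steps[of "r + 2"] profile_tilings_right_steps[of "r + 4"]
    profile_tilings_right_steps[of "r + 5"]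
  unfolding add.assoc numeral_plus_numeral add_num_simps by linarith

lemma profile_tilings_flat_values:
  "profile_tilings 0 [0,0,0,0] = 1" "profile_tilings 3 [0,0,0,0] = 3" "profile_tilings 6 [0,0,0,0] = 13"
  by (simp_all add: profile_tilings.simps first_zero_def)

lemma T13_4_eq_profile_tilings:
  "T13_4 N = (if 4 dvd N then profile_tilings (3 * (N div 4)) [0,0,0,0] else 0)"
proof (cases "4 dvd N")
  case True
  then obtain k where k: "N = 4 * k" by blast
  have rect: "{0..<4} \<times> {0..<3 * k} = region [0,0,0,0] 0 (0 + 3 * k)"
    by (auto simp: region_def less_Suc_eq numeral_eq_Suc nth_Cons split: nat.splits)
  have "card P = N" if "P \<in> tilings 1 3 ({0..<4} \<times> {0..<3 * k})" for P
    using card_tiling[OF that] k by (simp add: card_cartesian_product)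
  then have "{P. is_tiling 4 (3 * k) 1 3 P \<and> card P = N} = tilings 1 3 ({0..<4} \<times> {0..<3 * k})"
    by (auto simp: is_tiling_iff_tilings)
  then show ?thesis
    using k rect card_tilings_region[of "[0,0,0,0]" "3 * k" 0] by (simp add: T13_4_def)
next
  case False
  then show ?thesis by (simp add: T13_4_def) presburger
qed

lemma T13_4_recurrence:
  "T13_4 (n + 12) + 3 * T13_4 (n + 4) = 5 * T13_4 (n + 8) + T13_4 n"
proof (cases "4 dvd n")
  case True
  then obtain k where "n = 4 * k" by blast
  then show ?thesis
    using profile_tilings_flat_recurrence[of "3 * k"] by (simp add: T13_4_eq_profile_tilings algebra_simps)
next
  case False
  then have "\<not> 4 dvd n + 12" "\<not> 4 dvd n + 8" "\<not> 4 dvd n + 4" by presburger+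
  with False show ?thesis by (simp add: T13_4_eq_profile_tilings)
qed

lemma T13_4_initial:
  "T13_4 0 = 1" "T13_4 4 = 3" "T13_4 8 = 13" "\<not> 4 dvd n \<Longrightarrow> T13_4 n = 0"
  by (simp_all add: T13_4_eq_profile_tilings profile_tilings_flat_values)

lemma fps_nth_times_denominator:
  fixes t :: "nat \<Rightarrow> 'a::comm_ring_1"
  shows "fps_nth (Abs_fps t * (1 - 5 * fps_X^4 + 3 * fps_X^8 - fps_X^12)) n =
    t n - 5 * (if n < 4 then 0 else t (n - 4)) + 3 * (if n < 8 then 0 else t (n - 8))
      - (if n < 12 then 0 else t (n - 12))"
  by (simp add: ring_distribs mult.assoc[symmetric] fps_X_power_mult_right_nth numeral_fps_const)

lemma T13_4_fps_times_denominator: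
  "Abs_fps (\<lambda>N. of_nat (T13_4 N) :: 'a::comm_ring_1) * (1 - 5 * fps_X^4 + 3 * fps_X^8 - fps_X^12) =
    1 - 2 * fps_X^4 + fps_X^8"
proof (rule fps_ext)
  fix n
  let ?t = "\<lambda>N. of_nat (T13_4 N) :: 'a"
  have "?t n - 5 * (if n < 4 then 0 else ?t (n - 4)) + 3 * (if n < 8 then 0 else ?t (n - 8))
      - (if n < 12 then 0 else ?t (n - 12)) = (if n = 0 then 1 else if n = 4 then -2 else if n = 8 then 1 else 0)"
  proof (cases "n < 12")
    case True
    then have "n \<in> {0, 1, 2, 3, 4, 5, 6, 7, 8, 9, 10, 11}" by (simp add: less_Suc_eq numeral_eq_Suc)
    then show ?thesis by (auto simp: T13_4_initial)
  next
    case False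
    then obtain m where "n = m + 12" by (metis add.commute le_Suc_ex not_less)
    then show ?thesis
      using arg_cong[OF T13_4_recurrence[of m], of "of_nat :: nat \<Rightarrow> 'a"] by (simp add: algebra_simps)
  qed
  then show "fps_nth (Abs_fps ?t * (1 - 5 * fps_X^4 + 3 * fps_X^8 - fps_X^12)) n =
      fps_nth (1 - 2 * fps_X^4 + fps_X^8 :: 'a fps) n"
    unfolding fps_nth_times_denominator by (simp add: numeral_fps_const)
qed

theorem mainTheorem1:
  shows "Abs_fps (\<lambda>N. of_nat (T13_4 N) :: rat) =
    ((1 - fps_X)^2 * (1 + fps_X)^2 * (1 + fps_X^2)^2) /
    (1 - 5 * fps_X^4 + 3 * fps_X^8 - fps_X^12)"
proof -
  have numerator: "(1 - fps_X)^2 * (1 + fps_X)^2 * (1 + fps_X^2)^2 = (1 - 2 * fps_X^4 + fps_X^8 :: rat fps)"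
    by (simp add: algebra_simps power2_eq_square power_numeral_reduce)
  have "(1 - 5 * fps_X^4 + 3 * fps_X^8 - fps_X^12 :: rat fps) \<noteq> 0"
    by (auto simp: fps_eq_iff numeral_fps_const dest: spec[of _ 0])
  then show ?thesis
    by (simp add: numerator T13_4_fps_times_denominator[symmetric])
qed

end
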